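(* Let $1\le d<k$ and let $\mathcal{L}\subset\mathbb{R}^k=\mathbb{R}^d\times\mathbb{R}^{k-d}$ be a lattice such that the projection $\pi\colon\mathbb{R}^k\to\mathbb{R}^d$ is injective on $\mathcal{L}$ and $\pi_{\mathrm{int}}(\mathcal{L})$ is dense in $H=\mathbb{R}^{k-d}$; let $\mathcal{L}^*$ be its dual lattice, whose elements are written $(\theta,\theta^\star)$ with $\theta\in\mathbb{R}^d$, $\theta^\star\in\mathbb{R}^{k-d}$. Let $W\subset H$ be an aligned cube (faces parallel to the coordinate hyperplanes) of side length $\eta>0$. Let $t\in\mathbb{R}^d$, $R>0$ and $0<S_R\le R$, and assume $$\{\theta\in\mathbb{R}^d:(\theta,0)\in\mathcal{L}^*,\ 0<|\theta|\le S_R^{-1}\ \text{or}\ 0<|\theta+t|\le S_R^{-1}\}=\varnothing.$$ For $s\in\mathbb{R}^d$ and $\epsilon>0$ let $\mathcal{A}_s(\epsilon)=\{(x,y)\in\mathbb{R}^d\times\mathbb{R}^{k-d}: 0<|x+s|\le S_R^{-1},\ |y|\le\epsilon^{-1}\}$, and let $\epsilon_R$ be the infimum of the set of all $\epsilon>0$ for which $\mathcal{A}_0(\epsilon)\cap\mathcal{L}^*=\mathcal{A}_t(\epsilon)\cap\mathcal{L}^*=\varnothing$. Define $$\varphi_R(x)=\frac{(\mathbf{1}_{B_R}*\mathbf{1}_{B_{S_R}})(x)}{2^dS_R^d}\ (x\in\mathbb{R}^d),\qquad \psi_R(y)=\frac{(\mathbf{1}_W*\mathbf{1}_{B_{\epsilon_R}})(y)}{2^{k-d}\epsilon_R^{k-d}}\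 (y\in\mathbb{R}^{k-d}).$$ If $\epsilon_R\le\eta$, then $$\Bigl|\sum_{\substack{(\theta,\theta^\star)\in\mathcal{L}^*\\ \theta+t\neq0}}\widehat{\varphi_R}(\theta+t)\,\widehat{\psi_R}(\theta^\star)\Bigr|\le C\bigl(R^{d-1}S_R\,\eta^{k-d}+R^d\epsilon_R\,\eta^{k-d-1}\bigr),$$ where the constant $C>0$ depends only on $k$ and $d$.
   Context: $\pi_{\mathrm{int}}$ is the projection of $\mathbb{R}^k$ onto its last $k-d$ coordinates. The dual lattice is $\mathcal{L}^*=\{y\in\mathbb{R}^k: y\cdot x\in\mathbb{Z}\ \forall x\in\mathcal{L}\}$. $|\cdot|$ denotes the sup-norm, and $B_r$ denotes the closed sup-norm cube of side length $2r$ centred at $0$ (in $\mathbb{R}^d$ or $\mathbb{R}^{k-d}$ as appropriate). $*$ is convolution, and the Fourier transform is $\widehat{\phi}(y)=\int e^{-2\pi i xy}\phi(x)\,dx$. *)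

theory Defs
  imports "HOL-Analysis.Analysis"
begin

definition is_lattice :: "'a::euclidean_space set \<Rightarrow> bool" where
  "is_lattice L \<longleftrightarrow> (\<exists>B. independent B \<and> card B = DIM('a) \<and>
      L = {(\<Sum>b\<in>B. of_int (c b) *\<^sub>R b) | c. True})"

definition dual_lattice :: "'a::euclidean_space set \<Rightarrow> 'a set" where
  "dual_lattice L = {y. \<forall>x\<in>L. y \<bullet> x \<in> \<int>}"

definition supball :: "real \<Rightarrow> 'a::euclidean_space set" where
  "supball r = {x. infnorm x \<le> r}"

definition conv :: "('a::euclidean_space \<Rightarrow> real) \<Rightarrow> ('a \<Rightarrow> real) \<Rightarrow> 'a \<Rightarrow> real" where
  "conv f g x = (LINT y|lborel. f y * g (x - y))"

definition fourier :: "('a::euclidean_space \<Rightarrow> real) \<Rightarrow> 'a \<Rightarrow> complex" where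
  "fourier \<phi> \<xi> = (LINT x|lborel. cis (- 2 * pi * (x \<bullet> \<xi>)) * complex_of_real (\<phi> x))"

definition A_set :: "real \<Rightarrow> real^'d \<Rightarrow> real \<Rightarrow> ((real^'d) \<times> (real^'h)) set" where
  "A_set S s \<epsilon> = {(x, y). 0 < infnorm (x + s) \<and> infnorm (x + s) \<le> 1 / S \<and> infnorm y \<le> 1 / \<epsilon>}"

end

theory Submission
  imports Defs
begin

(*
  In each coordinate, the Fourier transform of the normalised convolution of an interval of
  length T with the window [-r, r] has modulus m with m <= T and r z^2 m <= 1, since
  |z| |FT(1_[a,c])(z)| <= 1/pi.  Hence |phi_R^(theta + t) psi_R^(theta_star)| is a product of such
  factors, with windows S in the physical and epsilon_R in the internal coordinates.
  By the definition of epsilon_R and the density of pi_int(L), the points (theta + t, theta_star)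
  lie in distinct cells of the grid of mesh 1/S resp. 1/epsilon_R, and each of them is at least
  one mesh width away from the origin in some coordinate.  Comparing with a summable majorant on
  Z^k that decays like 1/n^2 in that coordinate gives the two terms R^(d-1) S eta^(k-d) and
  R^d epsilon_R eta^(k-d-1).
*)

section \<open>Coordinates of Euclidean spaces\<close>

lemma inner_One_Basis: "b \<in> Basis \<Longrightarrow> One \<bullet> b = 1"
  by (simp add: inner_sum_left inner_Basis)

lemma supball_eq_cbox: "supball r = cbox (- (r *\<^sub>R One)) (r *\<^sub>R (One::'a::euclidean_space))"
  by (auto simp: supball_def mem_box infnorm_Max Max_le_iff abs_le_iff inner_One_Basis minus_le_iff)

lemma infnorm_less_iff: "infnorm (x::'a::euclidean_space) < r \<longleftrightarrow> (\<forall>b\<in>Basis. \<bar>x \<bullet> b\<bar> < r)"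
  by (simp add: infnorm_Max Max_less_iff)

lemma norm_Pair_le_infnorm:
  fixes x :: "'a::euclidean_space" and y :: "'b::euclidean_space"
  shows "norm (x, y) \<le> sqrt DIM('a) * infnorm x + sqrt DIM('b) * infnorm y"
  using norm_Pair_le[of x y] norm_le_infnorm[of x] norm_le_infnorm[of y] by linarith

lemma sum_Basis_Pair:
  fixes f :: "'a::euclidean_space \<times> 'b::euclidean_space \<Rightarrow> 'c::comm_monoid_add"
  shows "(\<Sum>a\<in>Basis. f a) = (\<Sum>b\<in>Basis. f (b, 0)) + (\<Sum>b\<in>Basis. f (0, b))"
  unfolding Basis_prod_def
  by (subst sum.union_disjoint) (auto simp: sum.reindex inj_on_def)

lemma prod_Basis_Pair:
  fixes f :: "'a::euclidean_space \<times> 'b::euclidean_space \<Rightarrow> 'c::comm_monoid_mult"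
  shows "(\<Prod>a\<in>Basis. f a) = (\<Prod>b\<in>Basis. f (b, 0)) * (\<Prod>b\<in>Basis. f (0, b))"
  unfolding Basis_prod_def
  by (subst prod.union_disjoint) (auto simp: prod.reindex inj_on_def)

lemma infnorm_fst_snd_less:
  fixes x :: "'a::euclidean_space \<times> 'b::euclidean_space"
  assumes "\<And>a. a \<in> Basis \<Longrightarrow> \<bar>x \<bullet> a\<bar> < (if snd a = 0 then r else s)"
  shows "infnorm (fst x) < r" "infnorm (snd x) < s"
proof -
  have "\<bar>fst x \<bullet> b\<bar> < r" if "b \<in> Basis" for b
    using assms[of "(b, 0)"] that by (simp add: Basis_prod_def inner_Pair_0)
  then show "infnorm (fst x) < r"
    by (simp add: infnorm_less_iff)
  have "\<bar>snd x \<bullet> b\<bar> < s" if "b \<in> Basis" for b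
    using assms[of "(0, b)"] that by (simp add: Basis_prod_def inner_Pair_0 nonzero_Basis)
  then show "infnorm (snd x) < s"
    by (simp add: infnorm_less_iff)
qed

section \<open>Fourier transforms of smoothed boxes\<close>

lemma integral_lborel_prod_Basis:
  fixes g :: "'a::euclidean_space \<Rightarrow> real \<Rightarrow> complex"
  assumes "\<And>b. b \<in> Basis \<Longrightarrow> integrable lborel (g b)"
  shows "(LINT x|(lborel::'a measure). (\<Prod>b\<in>Basis. g b (x \<bullet> b))) = (\<Prod>b\<in>Basis. LINT s|lborel. g b s)"
proof -
  interpret P: product_sigma_finite "\<lambda>_. lborel::real measure"
    by standard
  have [measurable]: "g b \<in> borel_measurable borel" if "b \<in> Basis" for b
    using assms[OF that] by auto
  have "(LINT x|(lborel::'a measure). (\<Prod>b\<in>Basis. g b (x \<bullet> b))) =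
     (\<integral>f. (\<Prod>b\<in>Basis. g b ((\<Sum>c\<in>Basis. f c *\<^sub>R c) \<bullet> b)) \<partial>(\<Pi>\<^sub>M b\<in>Basis. lborel))"
    by (subst lborel_eq) (subst integral_distr; auto)
  also have "\<dots> = (\<integral>f. (\<Prod>b\<in>Basis. g b (f b)) \<partial>(\<Pi>\<^sub>M b\<in>Basis. lborel))"
    by (intro Bochner_Integration.integral_cong refl prod.cong)
      (auto simp: inner_sum_left inner_Basis if_distrib sum.delta cong: if_cong)
  also have "\<dots> = (\<Prod>b\<in>Basis. LINT s|lborel. g b s)"
    by (rule P.product_integral_prod) (auto intro: assms)
  finally show ?thesis .
qed

lemma indicator_cbox_eq_prod:
  "indicator (cbox a c) (x::'a::euclidean_space) = (\<Prod>b\<in>Basis. indicator {a \<bullet> b..c \<bullet> b} (x \<bullet> b) :: real)"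
  by (auto simp: indicator_def mem_box prod_zero)

lemma cis_sum: "finite A \<Longrightarrow> cis (\<Sum>i\<in>A. f i) = (\<Prod>i\<in>A. cis (f i))"
  by (simp add: cis_conv_exp sum_distrib_left exp_sum)

lemma fourier_indicator_interval:
  "fourier (indicator {a..c}) (z::real) = (LINT s|lborel. indicator {a..c} s *\<^sub>R cis (- 2 * pi * (s * z)))"
  unfolding fourier_def by (intro Bochner_Integration.integral_cong) (auto simp: indicator_def)

lemma fourier_indicator_cbox:
  fixes a c \<xi> :: "'a::euclidean_space"
  shows "fourier (indicator (cbox a c)) \<xi> = (\<Prod>b\<in>Basis. fourier (indicator {a \<bullet> b..c \<bullet> b}) (\<xi> \<bullet> b))"
proof -
  define g where "g b s = indicator {a \<bullet> b..c \<bullet> b} s *\<^sub>R cis (- 2 * pi * (s * (\<xi> \<bullet> b)))" for b s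
  have "fourier (indicator (cbox a c)) \<xi> = (LINT x|(lborel::'a measure). (\<Prod>b\<in>Basis. g b (x \<bullet> b)))"
    unfolding fourier_def
  proof (intro Bochner_Integration.integral_cong refl)
    fix x :: 'a
    have "cis (- 2 * pi * (x \<bullet> \<xi>)) = (\<Prod>b\<in>Basis. cis (- 2 * pi * ((x \<bullet> b) * (\<xi> \<bullet> b))))"
      by (subst euclidean_inner) (simp add: sum_distrib_left cis_sum)
    then show "cis (- 2 * pi * (x \<bullet> \<xi>)) * complex_of_real (indicator (cbox a c) x) = (\<Prod>b\<in>Basis. g b (x \<bullet> b))"
      by (simp add: g_def indicator_cbox_eq_prod prod.distrib scaleR_conv_of_real mult.commute)
  qed
  also have "\<dots> = (\<Prod>b\<in>Basis. LINT s|lborel. g b s)"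
    by (rule integral_lborel_prod_Basis) (auto simp: g_def intro!: borel_integrable_compact continuous_intros)
  finally show ?thesis
    by (simp add: g_def fourier_indicator_interval)
qed

lemma fourier_divide: "fourier (\<lambda>x. f x / K) \<xi> = fourier f \<xi> / complex_of_real K"
  by (simp add: fourier_def of_real_divide)

lemma fourier_conv_indicator_cbox:
  fixes a1 c1 a2 c2 \<xi> :: "'a::euclidean_space"
  shows "fourier (conv (indicator (cbox a1 c1)) (indicator (cbox a2 c2))) \<xi>
       = fourier (indicator (cbox a1 c1)) \<xi> * fourier (indicator (cbox a2 c2)) \<xi>"
proof -
  let ?A = "cbox a1 c1" and ?B = "cbox a2 c2"
  define e where "e x = cis (- 2 * pi * (x \<bullet> \<xi>))" for x :: 'a
  define G where "G x y = e x * complex_of_real (indicator ?A y * indicator ?B (x - y))" for x y :: 'a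
  have [measurable]: "e \<in> borel_measurable borel"
    unfolding e_def by (intro borel_measurable_continuous_onI continuous_intros)
  have G_meas[measurable]: "(\<lambda>(x, y). G x y) \<in> borel_measurable (lborel \<Otimes>\<^sub>M lborel)"
    unfolding G_def by measurable
  have integrable_G: "integrable (lborel \<Otimes>\<^sub>M lborel) (\<lambda>(x, y). G x y)"
  proof (rule Bochner_Integration.integrable_bound)
    let ?C = "cbox (a1 + a2, a1) (c1 + c2, c1)"
    show "integrable (lborel \<Otimes>\<^sub>M lborel) (\<lambda>p. indicator ?C p *\<^sub>R (1::real))"
      unfolding lborel_prod by (intro borel_integrable_compact compact_cbox continuous_intros)
    have "(y \<in> ?A \<and> x - y \<in> ?B) \<longrightarrow> (x, y) \<in> ?C" for x y
      by (auto simp: mem_box Basis_prod_def inner_add_left inner_diff_left; smt (verit))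
    then show "AE p in lborel \<Otimes>\<^sub>M lborel. norm ((\<lambda>(x, y). G x y) p) \<le> norm (indicator ?C p *\<^sub>R (1::real))"
      by (intro AE_I2) (auto simp: G_def e_def norm_mult indicator_def)
  qed (fact G_meas)
  have "fourier (conv (indicator ?A) (indicator ?B)) \<xi> = (LINT x|lborel. LINT y|lborel. G x y)"
    unfolding fourier_def conv_def G_def e_def
    by (simp only: integral_mult_right_zero integral_complex_of_real)
  also have "\<dots> = (LINT y|lborel. LINT x|lborel. G x y)"
    by (rule lborel_pair.Fubini_integral[symmetric]) (rule integrable_G)
  also have "\<dots> = (LINT y|lborel. (e y * complex_of_real (indicator ?A y)) * fourier (indicator ?B) \<xi>)"
  proof (intro Bochner_Integration.integral_cong refl)
    fix y :: 'a
    have shift: "e (y + w) = e y * e w" for w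
      unfolding e_def cis_mult by (simp add: inner_add_left algebra_simps)
    have "(LINT x|lborel. G x y) = (LINT x|distr lborel borel ((+) y). G x y)"
      by (simp add: lborel_distr_plus)
    also have "\<dots> = (LINT w|lborel. G (y + w) y)"
      by (subst integral_distr) auto
    also have "\<dots> = (LINT w|lborel. (e y * complex_of_real (indicator ?A y)) * (e w * complex_of_real (indicator ?B w)))"
      by (simp add: G_def shift mult_ac)
    finally show "(LINT x|lborel. G x y) = (e y * complex_of_real (indicator ?A y)) * fourier (indicator ?B) \<xi>"
      unfolding fourier_def e_def by simp
  qed
  also have "\<dots> = fourier (indicator ?A) \<xi> * fourier (indicator ?B) \<xi>"
    unfolding fourier_def e_def by simp
  finally show ?thesis .
qed

lemma norm_fourier_indicator_interval_le:
  assumes "a \<le> c"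
  shows "norm (fourier (indicator {a..c}) (z::real)) \<le> c - a"
proof -
  have "norm (fourier (indicator {a..c}) z) \<le> (LINT s|lborel. norm (indicator {a..c} s *\<^sub>R cis (- 2 * pi * (s * z))))"
    unfolding fourier_indicator_interval by (rule integral_norm_bound)
  also have "\<dots> = (LINT s|lborel. indicator {a..c} s)"
    by (intro Bochner_Integration.integral_cong) (auto simp: indicator_def)
  finally show ?thesis using assms by simp
qed

lemma abs_mult_norm_fourier_indicator_interval_le:
  assumes "a \<le> c"
  shows "\<bar>z\<bar> * norm (fourier (indicator {a..c}) (z::real)) \<le> 1 / pi"
proof (cases "z = 0")
  case False
  define F where "F s = (\<i> / (2 * pi * z)) * cis (- 2 * pi * (s * z))" for s
  have "(F has_vector_derivative cis (- 2 * pi * (x * z))) (at x within {a..c})" for x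
    unfolding F_def has_vector_derivative_def
    by (rule derivative_eq_intros refl)+
      (use False in \<open>auto simp: fun_eq_iff field_simps scaleR_conv_of_real\<close>)
  then have "norm (fourier (indicator {a..c}) z) = norm (F c - F a)"
    unfolding fourier_indicator_interval
    by (subst integral_FTC_atLeastAtMost[OF assms]) (auto intro!: continuous_intros)
  also have "\<dots> \<le> norm (F c) + norm (F a)"
    by (rule norm_triangle_ineq4)
  also have "\<dots> = 1 / (pi * \<bar>z\<bar>)"
    by (simp add: F_def norm_mult norm_divide abs_mult)
  finally show ?thesis
    using False by (simp add: field_simps)
qed simp

text \<open>The modulus at \<open>z\<close> of the Fourier transform of the convolution of the indicators of
  \<open>[a, c]\<close> and \<open>[-r, r]\<close>, divided by \<open>2 r\<close>.\<close>

definition smoothed_box_factor :: "real \<Rightarrow> real \<Rightarrow> real \<Rightarrow> real \<Rightarrow> real" where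
  "smoothed_box_factor a c r z =
     norm (fourier (indicator {a..c}) z) * norm (fourier (indicator {-r..r}) z) / (2 * r)"

lemma smoothed_box_factor_bounds:
  assumes "a \<le> c" "r > 0"
  shows "0 \<le> smoothed_box_factor a c r z" "smoothed_box_factor a c r z \<le> c - a"
    and "r * z\<^sup>2 * smoothed_box_factor a c r z \<le> 1"
proof -
  let ?J1 = "norm (fourier (indicator {a..c}) z)" and ?J2 = "norm (fourier (indicator {-r..r}) z)"
  have J1: "?J1 \<le> c - a" "\<bar>z\<bar> * ?J1 \<le> 1 / pi"
    using assms by (auto intro: norm_fourier_indicator_interval_le abs_mult_norm_fourier_indicator_interval_le)
  have J2: "?J2 \<le> 2 * r" "\<bar>z\<bar> * ?J2 \<le> 1 / pi"
    using norm_fourier_indicator_interval_le[of "-r" r] abs_mult_norm_fourier_indicator_interval_le[of "-r" r]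
      assms by auto
  show "0 \<le> smoothed_box_factor a c r z"
    using assms by (simp add: smoothed_box_factor_def)
  have "?J1 * ?J2 \<le> (c - a) * (2 * r)"
    using J1 J2 assms by (intro mult_mono) auto
  then show "smoothed_box_factor a c r z \<le> c - a"
    using assms by (simp add: smoothed_box_factor_def field_simps)
  have "r * z\<^sup>2 * smoothed_box_factor a c r z = (\<bar>z\<bar> * ?J1) * (\<bar>z\<bar> * ?J2) / 2"
    using assms by (simp add: smoothed_box_factor_def field_simps power2_eq_square abs_mult_self_eq)
  also have "\<dots> \<le> (1 / pi) * (1 / pi) / 2"
    using J1 J2 by (intro divide_right_mono mult_mono) auto
  also have "\<dots> \<le> 1"
    using pi_gt3 by (simp add: field_simps) (smt (verit) mult_less_cancel_left1)
  finally show "r * z\<^sup>2 * smoothed_box_factor a c r z \<le> 1" .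
qed

lemma norm_fourier_smoothed_box:
  fixes a c \<xi> :: "'a::euclidean_space"
  assumes "r > 0"
  shows "norm (fourier (\<lambda>x. conv (indicator (cbox a c)) (indicator (supball r)) x
                              / (2 ^ DIM('a) * r ^ DIM('a))) \<xi>)
       = (\<Prod>b\<in>Basis. smoothed_box_factor (a \<bullet> b) (c \<bullet> b) r (\<xi> \<bullet> b))"
  using assms
  by (simp add: fourier_divide fourier_conv_indicator_cbox fourier_indicator_cbox supball_eq_cbox
      smoothed_box_factor_def norm_divide norm_mult norm_power prod_norm prod.distrib prod_dividef
      inner_One_Basis power_mult_distrib)

section \<open>Summing products over separated sets\<close>

definition inverse_square_sum :: real where
  "inverse_square_sum = infsum (\<lambda>n::int. if n = 0 then 0 else 1 / (of_int n)\<^sup>2) UNIV"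

definition tail_majorant :: "real \<Rightarrow> int \<Rightarrow> real" where
  "tail_majorant c n = (if n = 0 then 0 else 4 * c / (of_int n)\<^sup>2)"

definition cell_majorant :: "real \<Rightarrow> real \<Rightarrow> int \<Rightarrow> real" where
  "cell_majorant T c n = (if n \<in> {-1, 0} then T else 0) + tail_majorant c n"

lemma summable_on_inverse_square_int:
  "(\<lambda>n::int. if n = 0 then 0 else 1 / (of_int n)\<^sup>2 :: real) summable_on UNIV"
proof -
  let ?f = "\<lambda>n::int. if n = 0 then 0 else 1 / (of_int n)\<^sup>2 :: real"
  have "(\<lambda>n::nat. inverse (of_nat n ^ 2) :: real) summable_on UNIV"
    by (intro summable_nonneg_imp_summable_on inverse_power_summable) auto
  moreover have "?f \<circ> int = (\<lambda>n. inverse (of_nat n ^ 2))" "?f \<circ> (\<lambda>n. - int n) = (\<lambda>n. inverse (of_nat n ^ 2))"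
    by (auto simp: fun_eq_iff divide_inverse)
  ultimately have "?f summable_on range int" "?f summable_on range (\<lambda>n. - int n)"
    by (auto simp: summable_on_reindex inj_on_def)
  then have "?f summable_on (range int \<union> range (\<lambda>n. - int n))"
    by (rule summable_on_union)
  also have "range int \<union> range (\<lambda>n. - int n) = UNIV"
  proof -
    have "n \<in> range int \<union> range (\<lambda>n. - int n)" for n :: int
      using image_eqI[of n int "nat n"] image_eqI[of n "\<lambda>n. - int n" "nat (- n)"]
      by (cases "n \<ge> 0") auto
    then show ?thesis by blast
  qed
  finally show ?thesis .
qed

lemma inverse_square_sum_nonneg: "inverse_square_sum \<ge> 0"
  unfolding inverse_square_sum_def by (intro infsum_nonneg) auto

lemma tail_majorant_nonneg: "c \<ge> 0 \<Longrightarrow> tail_majorant c n \<ge> 0"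
  by (simp add: tail_majorant_def)

lemma cell_majorant_nonneg: "T \<ge> 0 \<Longrightarrow> c \<ge> 0 \<Longrightarrow> cell_majorant T c n \<ge> 0"
  by (simp add: cell_majorant_def tail_majorant_nonneg)

lemma has_sum_tail_majorant: "(tail_majorant c has_sum (4 * c * inverse_square_sum)) UNIV"
proof -
  have "tail_majorant c = (\<lambda>n. 4 * c * (if n = 0 then 0 else 1 / (of_int n)\<^sup>2))"
    by (auto simp: fun_eq_iff tail_majorant_def)
  then show ?thesis
    unfolding inverse_square_sum_def
    by (simp add: has_sum_cmult_right summable_on_inverse_square_int)
qed

lemma has_sum_cell_majorant: "(cell_majorant T c has_sum (2 * T + 4 * c * inverse_square_sum)) UNIV"
proof -
  have "((\<lambda>n::int. if n \<in> {-1, 0} then T else 0) has_sum 2 * T) UNIV"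
    by (rule has_sum_finite_neutralI[where B = "{-1, 0}"]) auto
  then show ?thesis
    unfolding cell_majorant_def using has_sum_add[OF _ has_sum_tail_majorant] by simp
qed

lemma le_tail_majorant_floor:
  assumes "c > 0" "0 \<le> w" "c * x\<^sup>2 * w \<le> 1" "1 / c \<le> \<bar>x\<bar>"
  shows "w \<le> tail_majorant c \<lfloor>c * x\<rfloor>"
proof -
  define n where "n = \<lfloor>c * x\<rfloor>"
  have "1 \<le> \<bar>c * x\<bar>"
    using assms by (simp add: abs_mult field_simps)
  moreover have "of_int n \<le> c * x" "c * x < of_int n + 1"
    unfolding n_def by linarith+
  ultimately have "n \<noteq> 0" and n_le: "\<bar>of_int n\<bar> \<le> 2 * \<bar>c * x\<bar>"
    by (auto simp: abs_if split: if_splits)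
  have "(of_int n)\<^sup>2 \<le> (2 * \<bar>c * x\<bar>)\<^sup>2"
    using n_le by (metis abs_ge_zero power2_abs power_mono)
  then have "w * (of_int n)\<^sup>2 \<le> w * (4 * (c * x)\<^sup>2)"
    using assms(2) by (intro mult_left_mono) (auto simp: power_mult_distrib)
  also have "\<dots> = 4 * c * (c * x\<^sup>2 * w)"
    by (simp add: power2_eq_square mult_ac)
  also have "\<dots> \<le> 4 * c"
    using assms by simp
  finally show ?thesis
    using \<open>n \<noteq> 0\<close> by (simp add: tail_majorant_def n_def[symmetric] le_divide_eq)
qed

lemma le_cell_majorant_floor:
  assumes "c > 0" "0 \<le> w" "w \<le> T" "c * x\<^sup>2 * w \<le> 1"
  shows "w \<le> cell_majorant T c \<lfloor>c * x\<rfloor>"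
proof (cases "1 / c \<le> \<bar>x\<bar>")
  case True
  then show ?thesis
    using le_tail_majorant_floor[OF assms(1,2,4) True] assms
    by (simp add: cell_majorant_def)
next
  case False
  then have "\<bar>c * x\<bar> < 1"
    using assms by (simp add: abs_mult field_simps)
  then have "-1 \<le> \<lfloor>c * x\<rfloor> \<and> \<lfloor>c * x\<rfloor> \<le> 0"
    by (simp add: le_floor_iff floor_le_iff abs_less_iff)
  then have "\<lfloor>c * x\<rfloor> \<in> {-1, 0}"
    by (simp only: insert_iff empty_iff) presburger
  then show ?thesis
    using assms tail_majorant_nonneg[of c "\<lfloor>c * x\<rfloor>"] by (auto simp: cell_majorant_def)
qed

lemma has_sum_prod_PiE_nonneg:
  fixes F :: "'x \<Rightarrow> 'n \<Rightarrow> real"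
  assumes "finite X" and "\<And>a. a \<in> X \<Longrightarrow> countable (B a)"
    and "\<And>a. a \<in> X \<Longrightarrow> (F a has_sum s a) (B a)" and "\<And>a n. a \<in> X \<Longrightarrow> F a n \<ge> 0"
  shows "((\<lambda>n. \<Prod>a\<in>X. F a (n a)) has_sum (\<Prod>a\<in>X. s a)) (PiE X B)"
proof -
  have abs: "(\<lambda>n. norm (F a n)) summable_on B a" if "a \<in> X" for a
    using assms(3,4)[OF that] by (simp add: has_sum_iff)
  then have summ: "Infinite_Set_Sum.abs_summable_on (F a) (B a)" if "a \<in> X" for a
    using that abs_summable_equivalent by blast
  have "Infinite_Set_Sum.abs_summable_on (\<lambda>n. \<Prod>a\<in>X. F a (n a)) (PiE X B)"
    by (rule abs_summable_on_prod_PiE) (use assms(1,2) summ in auto)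
  then have "Infinite_Sum.abs_summable_on (\<lambda>n. \<Prod>a\<in>X. F a (n a)) (PiE X B)"
    by (rule abs_summable_equivalent[THEN iffD2])
  then have "(\<lambda>n. \<Prod>a\<in>X. F a (n a)) summable_on PiE X B"
    by (rule abs_summable_summable)
  moreover have "infsum (\<lambda>n. \<Prod>a\<in>X. F a (n a)) (PiE X B) = (\<Prod>a\<in>X. s a)"
    using assms(3) by (subst infsum_prod_PiE_abs[OF assms(1) abs]) (auto simp: has_sum_iff intro!: prod.cong)
  ultimately show ?thesis
    by (simp add: has_sum_iff)
qed

lemma has_sum_sum:
  fixes f :: "'i \<Rightarrow> 'a \<Rightarrow> 'b::topological_comm_monoid_add"
  assumes "finite Y" and "\<And>i. i \<in> Y \<Longrightarrow> (f i has_sum s i) A"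
  shows "((\<lambda>x. \<Sum>i\<in>Y. f i x) has_sum (\<Sum>i\<in>Y. s i)) A"
  using assms by (induction Y rule: finite_induct) (auto intro!: has_sum_add)

lemma summable_on_le_injective_majorant:
  fixes g :: "'v \<Rightarrow> real" and H :: "'n \<Rightarrow> real"
  assumes "inj_on \<kappa> V" "\<kappa> ` V \<subseteq> P" "(H has_sum s) P" "\<And>n. n \<in> P \<Longrightarrow> H n \<ge> 0"
    and "\<And>v. v \<in> V \<Longrightarrow> 0 \<le> g v \<and> g v \<le> H (\<kappa> v)"
  shows "g summable_on V \<and> infsum g V \<le> s"
proof -
  have HP: "H summable_on P" "infsum H P = s"
    using assms(3) by (simp_all add: has_sum_iff)
  have HV: "H summable_on \<kappa> ` V"
    by (rule summable_on_subset_banach[OF HP(1) assms(2)])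
  then have Hk: "(H \<circ> \<kappa>) summable_on V"
    by (simp add: summable_on_reindex[OF assms(1), symmetric])
  have g: "g summable_on V"
    by (rule summable_on_comparison_test[OF Hk]) (use assms(5) in auto)
  have "infsum g V \<le> infsum (H \<circ> \<kappa>) V"
    by (rule infsum_mono[OF g Hk]) (use assms(5) in auto)
  also have "\<dots> = infsum H (\<kappa> ` V)"
    by (rule infsum_reindex[symmetric, OF assms(1)])
  also have "\<dots> \<le> s"
    unfolding HP(2)[symmetric] by (rule infsum_mono_neutral[OF HV HP(1)]) (use assms(2,4) in auto)
  finally show ?thesis
    using g by simp
qed

lemma abs_diff_less_one_if_floor_eq: "\<lfloor>x\<rfloor> = \<lfloor>y\<rfloor> \<Longrightarrow> \<bar>x - y\<bar> < (1::real)"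
  by linarith

lemma inj_on_floor_cells:
  fixes V :: "'a::euclidean_space set" and c :: "'a \<Rightarrow> real"
  assumes pos: "\<And>a. a \<in> Basis \<Longrightarrow> c a > 0"
    and separated: "\<And>u w. u \<in> V \<Longrightarrow> w \<in> V \<Longrightarrow> (\<And>a. a \<in> Basis \<Longrightarrow> \<bar>(u - w) \<bullet> a\<bar> < 1 / c a) \<Longrightarrow> u = w"
  shows "inj_on (\<lambda>u. restrict (\<lambda>a. \<lfloor>c a * (u \<bullet> a)\<rfloor>) Basis) V"
proof (rule inj_onI)
  fix u w assume "u \<in> V" "w \<in> V"
    and eq: "restrict (\<lambda>a. \<lfloor>c a * (u \<bullet> a)\<rfloor>) Basis = restrict (\<lambda>a. \<lfloor>c a * (w \<bullet> a)\<rfloor>) Basis"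
  have "\<bar>(u - w) \<bullet> a\<bar> < 1 / c a" if "a \<in> Basis" for a
  proof -
    have "\<lfloor>c a * (u \<bullet> a)\<rfloor> = \<lfloor>c a * (w \<bullet> a)\<rfloor>"
      using fun_cong[OF eq, of a] that by simp
    then have "\<bar>c a * (u \<bullet> a) - c a * (w \<bullet> a)\<bar> < 1"
      by (rule abs_diff_less_one_if_floor_eq)
    then have "c a * \<bar>(u - w) \<bullet> a\<bar> < 1"
      using pos[OF that] by (metis abs_mult abs_of_pos inner_diff_left right_diff_distrib)
    then show ?thesis
      using pos[OF that] by (simp add: field_simps)
  qed
  then show "u = w"
    by (intro separated \<open>u \<in> V\<close> \<open>w \<in> V\<close>)
qed

text \<open>The sum is dominated by a sum over the cells of the points, in which the coordinate \<open>a\<^sub>0\<close>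
  where a point is far from the origin contributes a factor decaying like the inverse square of
  its cell index.\<close>

lemma separated_sum_prod_le:
  fixes V :: "'a::euclidean_space set" and c T :: "'a \<Rightarrow> real" and m :: "'a \<Rightarrow> 'a \<Rightarrow> real"
  assumes pos: "\<And>a. a \<in> Basis \<Longrightarrow> c a > 0"
    and m: "\<And>a u. a \<in> Basis \<Longrightarrow> u \<in> V \<Longrightarrow> 0 \<le> m a u \<and> m a u \<le> T a \<and> c a * (u \<bullet> a)\<^sup>2 * m a u \<le> 1"
    and T: "\<And>a. a \<in> Basis \<Longrightarrow> T a \<ge> 0"
    and separated: "\<And>u w. u \<in> V \<Longrightarrow> w \<in> V \<Longrightarrow> (\<And>a. a \<in> Basis \<Longrightarrow> \<bar>(u - w) \<bullet> a\<bar> < 1 / c a) \<Longrightarrow> u = w"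
    and far: "\<And>u. u \<in> V \<Longrightarrow> \<exists>a\<in>Basis. 1 / c a \<le> \<bar>u \<bullet> a\<bar>"
  shows "(\<lambda>u. \<Prod>a\<in>Basis. m a u) summable_on V \<and>
         infsum (\<lambda>u. \<Prod>a\<in>Basis. m a u) V
           \<le> (\<Sum>a0\<in>Basis. \<Prod>a\<in>Basis. if a = a0 then 4 * c a * inverse_square_sum
                                              else 2 * T a + 4 * c a * inverse_square_sum)"
proof -
  define \<kappa> where "\<kappa> u = restrict (\<lambda>a. \<lfloor>c a * (u \<bullet> a)\<rfloor>) Basis" for u :: 'a
  define F where "F a0 a = (if a = a0 then tail_majorant (c a) else cell_majorant (T a) (c a))" for a0 a :: 'a
  define H where "H n = (\<Sum>a0\<in>Basis. \<Prod>a\<in>Basis. F a0 a (n a))" for n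
  have F_nonneg: "F a0 a n \<ge> 0" if "a \<in> Basis" for a0 a n
    using pos[OF that] T[OF that] by (auto simp: F_def tail_majorant_nonneg cell_majorant_nonneg)
  have "(H has_sum (\<Sum>a0\<in>Basis. \<Prod>a\<in>Basis. if a = a0 then 4 * c a * inverse_square_sum
                                              else 2 * T a + 4 * c a * inverse_square_sum))
        (PiE Basis (\<lambda>_. UNIV))"
    unfolding H_def
    by (intro has_sum_sum has_sum_prod_PiE_nonneg F_nonneg)
      (auto simp: F_def has_sum_tail_majorant has_sum_cell_majorant)
  moreover have "inj_on \<kappa> V"
    unfolding \<kappa>_def by (rule inj_on_floor_cells[OF pos separated])
  moreover have "0 \<le> (\<Prod>a\<in>Basis. m a u) \<and> (\<Prod>a\<in>Basis. m a u) \<le> H (\<kappa> u)" if u: "u \<in> V" for u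
  proof -
    obtain a0 where a0: "a0 \<in> Basis" "1 / c a0 \<le> \<bar>u \<bullet> a0\<bar>"
      using far[OF u] by blast
    have "m a u \<le> F a0 a (\<kappa> u a)" if "a \<in> Basis" for a
      using m[OF that u] pos[OF that] a0 that
      by (auto simp: F_def \<kappa>_def intro: le_tail_majorant_floor le_cell_majorant_floor)
    then have "(\<Prod>a\<in>Basis. m a u) \<le> (\<Prod>a\<in>Basis. F a0 a (\<kappa> u a))"
      using m u by (intro prod_mono) auto
    also have "\<dots> \<le> H (\<kappa> u)"
      unfolding H_def using a0(1) F_nonneg by (intro member_le_sum prod_nonneg) auto
    finally show ?thesis
      using m u by (auto intro: prod_nonneg)
  qed
  ultimately show ?thesis
    by (intro summable_on_le_injective_majorant[of \<kappa> V "PiE Basis (\<lambda>_. UNIV)" H])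
      (auto simp: \<kappa>_def H_def F_nonneg intro!: sum_nonneg prod_nonneg)
qed

lemma sum_prod_if_le:
  fixes p q r :: "'x \<Rightarrow> real"
  assumes "finite X" and "\<And>a. a \<in> X \<Longrightarrow> 0 \<le> p a" and "\<And>a. a \<in> X \<Longrightarrow> 0 \<le> q a \<and> q a \<le> r a"
    and "\<And>a. a \<in> X \<Longrightarrow> 0 < r a"
  shows "(\<Sum>a0\<in>X. \<Prod>a\<in>X. if a = a0 then p a else q a) \<le> (\<Sum>a0\<in>X. p a0 / r a0) * (\<Prod>a\<in>X. r a)"
  unfolding sum_distrib_right
proof (rule sum_mono)
  fix a0 assume "a0 \<in> X"
  have "(\<Prod>a\<in>X. if a = a0 then p a else q a) \<le> (\<Prod>a\<in>X. if a = a0 then p a else r a)"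
    using assms(2,3) by (intro prod_mono) auto
  also have "\<dots> = p a0 * (\<Prod>a\<in>X - {a0}. r a)"
  proof -
    have "(\<Prod>a\<in>X - {a0}. if a = a0 then p a else r a) = (\<Prod>a\<in>X - {a0}. r a)"
      by (intro prod.cong) auto
    then show ?thesis
      using \<open>a0 \<in> X\<close> assms(1) by (simp add: prod.remove)
  qed
  also have "\<dots> = p a0 / r a0 * (r a0 * (\<Prod>a\<in>X - {a0}. r a))"
    using assms(4)[OF \<open>a0 \<in> X\<close>] by simp
  also have "\<dots> = p a0 / r a0 * (\<Prod>a\<in>X. r a)"
    using \<open>a0 \<in> X\<close> assms(1) by (simp add: prod.remove)
  finally show "(\<Prod>a\<in>X. if a = a0 then p a else q a) \<le> p a0 / r a0 * (\<Prod>a\<in>X. r a)" .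
qed

lemma sum_prod_Basis_Pair_le:
  fixes S R \<epsilon> \<eta> K :: real and T :: "'a::euclidean_space \<times> 'b::euclidean_space \<Rightarrow> real"
  defines "\<sigma> \<equiv> \<lambda>a::'a \<times> 'b. if snd a = 0 then S else \<epsilon>"
    and "\<rho> \<equiv> \<lambda>a::'a \<times> 'b. if snd a = 0 then R else \<eta>"
  assumes "0 < S" "S \<le> R" "0 < \<epsilon>" "\<epsilon> \<le> \<eta>" "0 \<le> K"
    and T: "\<And>a. a \<in> Basis \<Longrightarrow> 0 \<le> T a \<and> T a \<le> 2 * \<rho> a"
  shows "(\<Sum>a0\<in>Basis. \<Prod>a\<in>Basis. if a = a0 then 4 * \<sigma> a * K else 2 * T a + 4 * \<sigma> a * K)
     \<le> real (DIM('a) + DIM('b)) * (4 + 4 * K) ^ (DIM('a) + DIM('b))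
         * (R ^ (DIM('a) - 1) * S * \<eta> ^ DIM('b) + R ^ DIM('a) * \<epsilon> * \<eta> ^ (DIM('b) - 1))"
proof -
  define M where "M = 4 + 4 * K"
  define D where "D = DIM('a)"
  define h where "h = DIM('b)"
  have M: "0 < M" "4 * K \<le> M"
    using assms by (auto simp: M_def)
  have \<sigma>_\<rho>: "0 < \<sigma> a" "\<sigma> a \<le> \<rho> a" "0 < \<rho> a" for a
    using assms by (auto simp: \<sigma>_def \<rho>_def)
  have "(\<Sum>a0\<in>Basis. \<Prod>a\<in>Basis. if a = a0 then 4 * \<sigma> a * K else 2 * T a + 4 * \<sigma> a * K)
      \<le> (\<Sum>a0\<in>Basis. 4 * \<sigma> a0 * K / (M * \<rho> a0)) * (\<Prod>a\<in>Basis. M * \<rho> a)"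
  proof (rule sum_prod_if_le)
    fix a :: "'a \<times> 'b" assume "a \<in> Basis"
    have "4 * \<sigma> a * K \<le> 4 * \<rho> a * K"
      using \<sigma>_\<rho>[of a] assms(7) by (intro mult_right_mono) auto
    then show "0 \<le> 2 * T a + 4 * \<sigma> a * K \<and> 2 * T a + 4 * \<sigma> a * K \<le> M * \<rho> a"
      using T[OF \<open>a \<in> Basis\<close>] \<sigma>_\<rho>[of a] assms(7) by (auto simp: M_def algebra_simps)
  qed (use M \<sigma>_\<rho> assms(7) in \<open>auto intro: mult_nonneg_nonneg less_imp_le\<close>)
  also have "\<dots> \<le> (\<Sum>a0\<in>Basis. \<sigma> a0 / \<rho> a0) * (\<Prod>a\<in>Basis. M * \<rho> a)"
  proof (intro mult_right_mono sum_mono prod_nonneg)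
    fix a :: "'a \<times> 'b"
    have "4 * K * \<sigma> a \<le> M * \<sigma> a"
      using M \<sigma>_\<rho>[of a] by (intro mult_right_mono) auto
    then show "4 * \<sigma> a * K / (M * \<rho> a) \<le> \<sigma> a / \<rho> a"
      using M \<sigma>_\<rho>[of a] by (auto simp: field_simps)
  qed (use M \<sigma>_\<rho> in \<open>auto intro: less_imp_le\<close>)
  also have "\<dots> = M ^ (D + h) * (real D * R ^ (D - 1) * S * \<eta> ^ h + real h * R ^ D * \<epsilon> * \<eta> ^ (h - 1))"
  proof -
    have sum_eq: "(\<Sum>a\<in>Basis. \<sigma> a / \<rho> a) = real D * (S / R) + real h * (\<epsilon> / \<eta>)"
      by (simp add: sum_Basis_Pair \<sigma>_def \<rho>_def D_def h_def nonzero_Basis cong: sum.cong)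
    have prod_eq: "(\<Prod>a\<in>Basis. M * \<rho> a) = M ^ (D + h) * R ^ D * \<eta> ^ h"
      by (simp add: prod_Basis_Pair \<rho>_def D_def h_def nonzero_Basis power_add power_mult_distrib mult_ac
          cong: prod.cong)
    have "R ^ D = R * R ^ (D - 1)" "\<eta> ^ h = \<eta> * \<eta> ^ (h - 1)"
      by (simp_all add: D_def h_def power_eq_if)
    then show ?thesis
      unfolding sum_eq prod_eq using assms(3-6) by (simp add: field_simps)
  qed
  also have "\<dots> \<le> M ^ (D + h) * (real (D + h) * (R ^ (D - 1) * S * \<eta> ^ h + R ^ D * \<epsilon> * \<eta> ^ (h - 1)))"
    using M assms(3-6) by (intro mult_left_mono) (auto simp: algebra_simps intro!: add_mono mult_right_mono)
  finally show ?thesis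
    by (simp add: M_def D_def h_def mult_ac)
qed

section \<open>The dual lattice\<close>

lemma dual_lattice_diff: "v \<in> dual_lattice L \<Longrightarrow> w \<in> dual_lattice L \<Longrightarrow> v - w \<in> dual_lattice L"
  by (auto simp: dual_lattice_def inner_diff_left intro: Ints_diff)

text \<open>A dual vector \<open>(0, y)\<close> pairs integrally with the dense set \<open>snd ` L\<close>, hence with all of
  the internal space.\<close>

lemma dual_lattice_zero_Pair:
  fixes L :: "('a::euclidean_space \<times> 'b::euclidean_space) set"
  assumes "closure (snd ` L) = UNIV" and "(0, y) \<in> dual_lattice L"
  shows "y = 0"
proof (rule ccontr)
  assume "y \<noteq> 0"
  have "closed {z. y \<bullet> z \<in> \<int>}"
    by (intro closed_vimage[of "\<int>" "\<lambda>z. y \<bullet> z", unfolded vimage_def]) (auto intro: continuous_intros)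
  moreover have "snd ` L \<subseteq> {z. y \<bullet> z \<in> \<int>}"
    using assms(2) by (auto simp: dual_lattice_def)
  ultimately have "y \<bullet> ((1 / (2 * (y \<bullet> y))) *\<^sub>R y) \<in> \<int>"
    using closure_minimal assms(1) by blast
  then obtain k :: int where "1 / 2 = real_of_int k"
    using \<open>y \<noteq> 0\<close> by (auto elim: Ints_cases)
  then have "2 * k = 1"
    by linarith
  then show False
    by presburger
qed

lemma lattice_basis_subset:
  fixes B :: "'a::real_vector set"
  assumes "L = {(\<Sum>b\<in>B. of_int (c b) *\<^sub>R b) | c. True}" and "finite B"
  shows "B \<subseteq> L"
proof
  fix b assume "b \<in> B"
  have "(\<Sum>b'\<in>B. of_int (if b' = b then 1 else 0) *\<^sub>R b') = (\<Sum>b'\<in>B. if b' = b then b' else 0)"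
    by (intro sum.cong) auto
  also have "\<dots> = b"
    using \<open>b \<in> B\<close> assms(2) by simp
  finally have "(\<Sum>b'\<in>B. of_int (if b' = b then 1 else 0) *\<^sub>R b') = b" .
  then show "b \<in> L"
    unfolding assms(1) by (intro CollectI exI[of _ "\<lambda>b'. if b' = b then 1 else 0"]) simp
qed

lemma inj_restrict_inner_spanning:
  fixes B :: "'a::euclidean_space set"
  assumes "span B = UNIV"
  shows "inj (\<lambda>v. restrict (\<lambda>b. v \<bullet> b) B)"
proof (rule injI)
  fix v w assume eq: "restrict (\<lambda>b. v \<bullet> b) B = restrict (\<lambda>b. w \<bullet> b) B"
  have "orthogonal (v - w) b" if "b \<in> B" for b
    using that restrict_apply'[of b B "\<lambda>b. v \<bullet> b"] restrict_apply'[of b B "\<lambda>b. w \<bullet> b"]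
    by (simp add: eq orthogonal_def inner_diff_left)
  then have "orthogonal (v - w) (v - w)"
    using assms by (metis UNIV_I orthogonal_to_span)
  then show "v = w"
    by (simp add: orthogonal_def)
qed

lemma finite_dual_lattice_norm_le:
  fixes L :: "'a::euclidean_space set"
  assumes "is_lattice L"
  shows "finite {v \<in> dual_lattice L. norm v \<le> M}"
proof -
  obtain B where B: "independent B" "card B = DIM('a)" "L = {(\<Sum>b\<in>B. of_int (c b) *\<^sub>R b) | c. True}"
    using assms unfolding is_lattice_def by blast
  have "finite B"
    using B(1) by (simp add: finiteI_independent)
  define T where "T v = restrict (\<lambda>b. v \<bullet> b) B" for v :: 'a
  have "inj T"
    unfolding T_def using card_ge_dim_independent[of B UNIV] B
    by (intro inj_restrict_inner_spanning) auto
  moreover have "T ` {v \<in> dual_lattice L. norm v \<le> M} \<subseteq> PiE B (\<lambda>b. {k. k \<in> \<int> \<and> \<bar>k\<bar> \<le> M * norm b})"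
  proof clarify
    fix v assume v: "v \<in> dual_lattice L" "norm v \<le> M"
    have "\<bar>v \<bullet> b\<bar> \<le> M * norm b" for b
      using Cauchy_Schwarz_ineq2[of v b] mult_right_mono[OF v(2) norm_ge_zero[of b]] by linarith
    then show "T v \<in> PiE B (\<lambda>b. {k. k \<in> \<int> \<and> \<bar>k\<bar> \<le> M * norm b})"
      using v(1) lattice_basis_subset[OF B(3) \<open>finite B\<close>] by (auto simp: T_def dual_lattice_def)
  qed
  moreover have "finite (PiE B (\<lambda>b. {k. k \<in> \<int> \<and> \<bar>k\<bar> \<le> M * norm b}))"
    by (intro finite_PiE \<open>finite B\<close> finite_abs_int_segment)
  ultimately show ?thesis
    by (meson finite_imageD finite_subset inj_on_subset subset_UNIV)
qed

text \<open>The infimum of this set is the \<open>\<epsilon>\<^sub>R\<close> of the statement.\<close>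

definition admissible_eps :: "real \<Rightarrow> real^'d \<Rightarrow> ((real^'d) \<times> (real^'h)) set \<Rightarrow> real set" where
  "admissible_eps S t L =
     {\<epsilon>. 0 < \<epsilon> \<and> A_set S 0 \<epsilon> \<inter> dual_lattice L = {} \<and> A_set S t \<epsilon> \<inter> dual_lattice L = {}}"

text \<open>Dual vectors with \<open>|\<theta> + s| \<le> 1/S\<close> and \<open>|\<theta>\<^sup>\<star>| \<le> 1\<close> form a finite set. Those with
  \<open>\<theta>\<^sup>\<star> = 0\<close> are excluded by hypothesis, and the others have \<open>|\<theta>\<^sup>\<star>| \<ge> m\<close> for some
  \<open>m > 0\<close>, so that \<open>\<epsilon> = 2/m\<close> is admissible.\<close>

lemma admissible_eps_nonempty:
  fixes L :: "((real^'d) \<times> (real^'h)) set"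
  assumes "is_lattice L" and "S > 0"
    and no_fst: "{\<theta>. (\<theta>, 0) \<in> dual_lattice L \<and> ((0 < infnorm \<theta> \<and> infnorm \<theta> \<le> 1 / S) \<or>
         (0 < infnorm (\<theta> + t) \<and> infnorm (\<theta> + t) \<le> 1 / S))} = {}"
  shows "admissible_eps S t L \<noteq> {}"
proof -
  define M where "M = sqrt CARD('d) * (1 / S + infnorm t) + sqrt CARD('h)"
  define F where "F = {v \<in> dual_lattice L. norm v \<le> M \<and> snd v \<noteq> 0}"
  have "finite F"
    using finite_dual_lattice_norm_le[OF assms(1), of M] by (rule finite_subset[rotated]) (auto simp: F_def)
  define m where "m = Min (insert 1 ((\<lambda>v. infnorm (snd v)) ` F))"
  have m: "0 < m" "m \<le> 1" "\<And>v. v \<in> F \<Longrightarrow> m \<le> infnorm (snd v)"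
    using \<open>finite F\<close> by (auto simp: m_def F_def infnorm_pos_lt)
  have "A_set S s (2 / m) \<inter> dual_lattice L = {}" if s: "s = 0 \<or> s = t" for s
  proof (rule ccontr)
    assume "A_set S s (2 / m) \<inter> dual_lattice L \<noteq> {}"
    then obtain x y where xy: "(x, y) \<in> dual_lattice L" "0 < infnorm (x + s)" "infnorm (x + s) \<le> 1 / S"
      and y: "infnorm y \<le> m / 2"
      by (auto simp: A_set_def)
    have "infnorm x \<le> 1 / S + infnorm t"
      using infnorm_triangle[of "x + s" "- s"] xy(3) s infnorm_pos_le[of t] by (auto simp: infnorm_neg)
    moreover have "infnorm y \<le> 1"
      using y m(2) by linarith
    ultimately have "sqrt CARD('d) * infnorm x + sqrt CARD('h) * infnorm y \<le> M"
      unfolding M_def by (intro add_mono mult_left_mono mult_left_le) auto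
    then have "norm (x, y) \<le> M"
      using norm_Pair_le_infnorm[of x y] by simp
    show False
    proof (cases "y = 0")
      case True
      then show False
        using no_fst xy s by auto
    next
      case False
      then have "m \<le> infnorm y"
        using m(3)[of "(x, y)"] xy(1) \<open>norm (x, y) \<le> M\<close> by (simp add: F_def)
      then show False
        using y m(1) by linarith
    qed
  qed
  then have "2 / m \<in> admissible_eps S t L"
    using m(1) by (simp add: admissible_eps_def)
  then show ?thesis
    by blast
qed

lemma one_le_Inf_admissible_eps_mult_infnorm:
  assumes "admissible_eps S t L \<noteq> {}" and "s = 0 \<or> s = t" and "v \<in> dual_lattice L"
    and "0 < infnorm (fst v + s)" "infnorm (fst v + s) \<le> 1 / S"
  shows "1 \<le> Inf (admissible_eps S t L) * infnorm (snd v)"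
proof -
  have less: "1 / \<epsilon> < infnorm (snd v)" if "\<epsilon> \<in> admissible_eps S t L" for \<epsilon>
  proof -
    have "v \<notin> A_set S s \<epsilon>"
      using that assms(2,3) by (auto simp: admissible_eps_def)
    then show ?thesis
      using assms(4,5) by (cases v) (simp add: A_set_def not_le)
  qed
  obtain \<epsilon>0 where \<epsilon>0: "\<epsilon>0 \<in> admissible_eps S t L"
    using assms(1) by blast
  then have "0 < 1 / \<epsilon>0"
    by (simp add: admissible_eps_def)
  then have pos: "0 < infnorm (snd v)"
    using less[OF \<epsilon>0] by linarith
  have "1 / infnorm (snd v) \<le> \<epsilon>" if "\<epsilon> \<in> admissible_eps S t L" for \<epsilon>
    using less[OF that] that pos by (auto simp: admissible_eps_def field_simps)
  then have "1 / infnorm (snd v) \<le> Inf (admissible_eps S t L)"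
    by (intro cInf_greatest assms(1))
  then show ?thesis
    using pos by (simp add: field_simps)
qed

lemma dual_lattice_eq_if_close:
  fixes L :: "((real^'d) \<times> (real^'h)) set"
  assumes "closure (snd ` L) = UNIV" and "admissible_eps S t L \<noteq> {}"
    and "v \<in> dual_lattice L" "w \<in> dual_lattice L"
    and "infnorm (fst v - fst w) \<le> 1 / S" "Inf (admissible_eps S t L) * infnorm (snd v - snd w) < 1"
  shows "v = w"
proof (cases "fst v = fst w")
  case True
  have "v - w = (0, snd v - snd w)"
    using True by (simp add: prod_eq_iff)
  then have "(0, snd v - snd w) \<in> dual_lattice L"
    using dual_lattice_diff[OF assms(3,4)] by simp
  then have "snd v - snd w = 0"
    by (rule dual_lattice_zero_Pair[OF assms(1)])
  with True show ?thesis
    by (simp add: prod_eq_iff)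
next
  case False
  then have "1 \<le> Inf (admissible_eps S t L) * infnorm (snd (v - w))"
    using assms(2,5) dual_lattice_diff[OF assms(3,4)]
    by (intro one_le_Inf_admissible_eps_mult_infnorm[where s = 0]) (auto simp: infnorm_pos_lt)
  with assms(6) show ?thesis
    by simp
qed

lemma shifted_dual_lattice_sum_prod_le:
  fixes L :: "((real^'d) \<times> (real^'h)) set" and t :: "real^'d" and S \<epsilon>R :: real
    and T :: "(real^'d) \<times> (real^'h) \<Rightarrow> real"
    and m :: "(real^'d) \<times> (real^'h) \<Rightarrow> (real^'d) \<times> (real^'h) \<Rightarrow> real"
  defines "\<sigma> \<equiv> \<lambda>a::(real^'d) \<times> (real^'h). if snd a = 0 then S else \<epsilon>R"
  assumes dense: "closure (snd ` L) = UNIV" and admissible: "admissible_eps S t L \<noteq> {}"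
    and \<epsilon>R_def: "\<epsilon>R = Inf (admissible_eps S t L)" and pos: "0 < S" "0 < \<epsilon>R"
    and m: "\<And>a u. a \<in> Basis \<Longrightarrow> 0 \<le> m a u \<and> m a u \<le> T a \<and> \<sigma> a * (u \<bullet> a)\<^sup>2 * m a u \<le> 1"
    and T: "\<And>a. a \<in> Basis \<Longrightarrow> T a \<ge> 0"
  shows "(\<lambda>v. \<Prod>a\<in>Basis. m a (v + (t, 0))) summable_on {v \<in> dual_lattice L. fst v + t \<noteq> 0} \<and>
         infsum (\<lambda>v. \<Prod>a\<in>Basis. m a (v + (t, 0))) {v \<in> dual_lattice L. fst v + t \<noteq> 0}
           \<le> (\<Sum>a0\<in>Basis. \<Prod>a\<in>Basis. if a = a0 then 4 * \<sigma> a * inverse_square_sum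
                                          else 2 * T a + 4 * \<sigma> a * inverse_square_sum)"
proof -
  define V where "V = (\<lambda>v. v + (t, 0)) ` {v \<in> dual_lattice L. fst v + t \<noteq> 0}"
  have inv_\<sigma>: "1 / \<sigma> a = (if snd a = 0 then 1 / S else 1 / \<epsilon>R)" for a
    by (simp add: \<sigma>_def)
  have "(\<lambda>u. \<Prod>a\<in>Basis. m a u) summable_on V \<and>
        infsum (\<lambda>u. \<Prod>a\<in>Basis. m a u) V
          \<le> (\<Sum>a0\<in>Basis. \<Prod>a\<in>Basis. if a = a0 then 4 * \<sigma> a * inverse_square_sum
                                          else 2 * T a + 4 * \<sigma> a * inverse_square_sum)"
  proof (rule separated_sum_prod_le)
    fix u w assume "u \<in> V" "w \<in> V"
      and close: "\<And>a. a \<in> Basis \<Longrightarrow> \<bar>(u - w) \<bullet> a\<bar> < 1 / \<sigma> a"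
    then obtain v v' where v: "v \<in> dual_lattice L" "v' \<in> dual_lattice L" "u = v + (t, 0)" "w = v' + (t, 0)"
      by (auto simp: V_def)
    have "infnorm (fst (v - v')) < 1 / S" "infnorm (snd (v - v')) < 1 / \<epsilon>R"
      using infnorm_fst_snd_less[of "v - v'" "1 / S" "1 / \<epsilon>R"] close by (simp_all add: v inv_\<sigma>)
    then show "u = w"
      using dual_lattice_eq_if_close[OF dense admissible v(1,2)] pos
      by (simp add: v \<epsilon>R_def[symmetric] field_simps)
  next
    fix u assume "u \<in> V"
    then obtain v where v: "v \<in> dual_lattice L" "fst v + t \<noteq> 0" "u = v + (t, 0)"
      by (auto simp: V_def)
    show "\<exists>a\<in>Basis. 1 / \<sigma> a \<le> \<bar>u \<bullet> a\<bar>"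
    proof (rule ccontr)
      assume "\<not> ?thesis"
      then have "infnorm (fst u) < 1 / S" "infnorm (snd u) < 1 / \<epsilon>R"
        using infnorm_fst_snd_less[of u "1 / S" "1 / \<epsilon>R"] by (simp_all add: inv_\<sigma> not_le)
      moreover have "1 \<le> \<epsilon>R * infnorm (snd v)" if "infnorm (fst v + t) \<le> 1 / S"
        unfolding \<epsilon>R_def using v(1,2) that
        by (intro one_le_Inf_admissible_eps_mult_infnorm[OF admissible]) (auto simp: infnorm_pos_lt)
      ultimately show False
        using pos by (simp add: v field_simps)
    qed
  qed (use m T pos in \<open>auto simp: \<sigma>_def\<close>)
  moreover have "inj_on (\<lambda>v. v + (t, 0)) {v \<in> dual_lattice L. fst v + t \<noteq> 0}"
    by (simp add: inj_on_def)
  ultimately show ?thesis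
    by (simp add: V_def summable_on_reindex infsum_reindex o_def)
qed

lemma norm_fourier_phi_psi:
  fixes c :: "real^'h" and t :: "real^'d" and R S \<epsilon> \<eta> :: real
  defines "lo \<equiv> (- (R *\<^sub>R One), c)" and "hi \<equiv> (R *\<^sub>R One, c + \<eta> *\<^sub>R One)"
    and "\<sigma> \<equiv> \<lambda>a::(real^'d) \<times> (real^'h). if snd a = 0 then S else \<epsilon>"
  assumes "0 < S" "0 < \<epsilon>"
  shows "norm (fourier (\<lambda>x. conv (indicator (supball R)) (indicator (supball S)) x
                              / (2 ^ CARD('d) * S ^ CARD('d))) (\<theta> + t)
             * fourier (\<lambda>y. conv (indicator (cbox c (c + \<eta> *\<^sub>R One))) (indicator (supball \<epsilon>)) y
                              / (2 ^ CARD('h) * \<epsilon> ^ CARD('h))) \<theta>s)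
       = (\<Prod>a\<in>Basis. smoothed_box_factor (lo \<bullet> a) (hi \<bullet> a) (\<sigma> a) (((\<theta>, \<theta>s) + (t, 0)) \<bullet> a))"
proof -
  have "norm (fourier (\<lambda>x. conv (indicator (supball R)) (indicator (supball S)) x
                              / (2 ^ CARD('d) * S ^ CARD('d))) (\<theta> + t))
      = (\<Prod>b\<in>Basis. smoothed_box_factor (- R) R S ((\<theta> + t) \<bullet> b))"
    unfolding supball_eq_cbox[of R]
    using norm_fourier_smoothed_box[OF assms(4), of "- (R *\<^sub>R One)" "R *\<^sub>R One" "\<theta> + t"]
    by (simp add: inner_One_Basis cong: prod.cong)
  moreover have "norm (fourier (\<lambda>y. conv (indicator (cbox c (c + \<eta> *\<^sub>R One))) (indicator (supball \<epsilon>)) y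
                              / (2 ^ CARD('h) * \<epsilon> ^ CARD('h))) \<theta>s)
      = (\<Prod>b\<in>Basis. smoothed_box_factor (c \<bullet> b) (c \<bullet> b + \<eta>) \<epsilon> (\<theta>s \<bullet> b))"
    using norm_fourier_smoothed_box[OF assms(5), of c "c + \<eta> *\<^sub>R One" \<theta>s]
    by (simp add: inner_One_Basis inner_add_left cong: prod.cong)
  ultimately show ?thesis
    by (simp add: norm_mult prod_Basis_Pair inner_Pair_0 lo_def hi_def \<sigma>_def nonzero_Basis
        inner_add_left inner_One_Basis
        cong: prod.cong)
qed

lemma dual_lattice_fourier_sum_bound:
  fixes L :: "((real^'d) \<times> (real^'h)) set" and c :: "real^'h" and t :: "real^'d"
    and R S \<eta> \<epsilon>R :: real
  defines "f \<equiv> \<lambda>(\<theta>, \<theta>s).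
           fourier (\<lambda>x. conv (indicator (supball R)) (indicator (supball S)) x
                          / (2 ^ CARD('d) * S ^ CARD('d))) (\<theta> + t)
         * fourier (\<lambda>y. conv (indicator (cbox c (c + \<eta> *\<^sub>R One))) (indicator (supball \<epsilon>R)) y
                          / (2 ^ CARD('h) * \<epsilon>R ^ CARD('h))) \<theta>s"
    and "I \<equiv> {(\<theta>, \<theta>s). (\<theta>, \<theta>s) \<in> dual_lattice L \<and> \<theta> + t \<noteq> 0}"
  assumes dense: "closure (snd ` L) = UNIV" and admissible: "admissible_eps S t L \<noteq> {}"
    and \<epsilon>R_def: "\<epsilon>R = Inf (admissible_eps S t L)"
    and S: "0 < S" "S \<le> R" and \<epsilon>R: "0 < \<epsilon>R" "\<epsilon>R \<le> \<eta>"
  shows "f summable_on I \<and>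
         norm (infsum f I) \<le> real (CARD('d) + CARD('h)) * (4 + 4 * inverse_square_sum) ^ (CARD('d) + CARD('h))
           * (R ^ (CARD('d) - 1) * S * \<eta> ^ CARD('h) + R ^ CARD('d) * \<epsilon>R * \<eta> ^ (CARD('h) - 1))"
proof -
  define lo :: "(real^'d) \<times> (real^'h)" where "lo = (- (R *\<^sub>R One), c)"
  define hi :: "(real^'d) \<times> (real^'h)" where "hi = (R *\<^sub>R One, c + \<eta> *\<^sub>R One)"
  define m where "m a u = smoothed_box_factor (lo \<bullet> a) (hi \<bullet> a) (if snd a = 0 then S else \<epsilon>R) (u \<bullet> a)"
    for a u :: "(real^'d) \<times> (real^'h)"
  have norm_f: "norm (f v) = (\<Prod>a\<in>Basis. m a (v + (t, 0)))" for v
    using norm_fourier_phi_psi[OF S(1) \<epsilon>R(1), where R = R and c = c and \<eta> = \<eta> and t = t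
        and \<theta> = "fst v" and \<theta>s = "snd v"]
    by (simp add: f_def m_def lo_def hi_def case_prod_beta)
  have box: "lo \<bullet> a \<le> hi \<bullet> a \<and> hi \<bullet> a - lo \<bullet> a \<le> 2 * (if snd a = 0 then R else \<eta>)" if "a \<in> Basis" for a
    using that S \<epsilon>R by (auto simp: in_Basis_prod_iff lo_def hi_def inner_prod_def inner_One_Basis inner_add_left)
  have "0 \<le> m a u \<and> m a u \<le> hi \<bullet> a - lo \<bullet> a \<and> (if snd a = 0 then S else \<epsilon>R) * (u \<bullet> a)\<^sup>2 * m a u \<le> 1"
    if "a \<in> Basis" for a u
    using box[OF that] smoothed_box_factor_bounds[of "lo \<bullet> a" "hi \<bullet> a" "if snd a = 0 then S else \<epsilon>R"] S \<epsilon>R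
    by (simp add: m_def)
  moreover have "I = {v \<in> dual_lattice L. fst v + t \<noteq> 0}"
    by (auto simp: I_def)
  ultimately have norm_summable: "(\<lambda>v. norm (f v)) summable_on I"
    and norm_sum: "infsum (\<lambda>v. norm (f v)) I
          \<le> (\<Sum>a0\<in>Basis. \<Prod>a\<in>Basis. if a = a0 then 4 * (if snd a = 0 then S else \<epsilon>R) * inverse_square_sum
                            else 2 * (hi \<bullet> a - lo \<bullet> a) + 4 * (if snd a = 0 then S else \<epsilon>R) * inverse_square_sum)"
    using shifted_dual_lattice_sum_prod_le[OF dense admissible \<epsilon>R_def S(1) \<epsilon>R(1), of m "\<lambda>a. hi \<bullet> a - lo \<bullet> a"] box
    by (simp_all add: norm_f)
  have "norm (infsum f I) \<le> infsum (\<lambda>v. norm (f v)) I"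
    by (rule norm_infsum_bound[OF norm_summable])
  also note norm_sum
  also have "(\<Sum>a0\<in>Basis. \<Prod>a\<in>Basis. if a = a0 then 4 * (if snd a = 0 then S else \<epsilon>R) * inverse_square_sum
                            else 2 * (hi \<bullet> a - lo \<bullet> a) + 4 * (if snd a = 0 then S else \<epsilon>R) * inverse_square_sum)
      \<le> real (CARD('d) + CARD('h)) * (4 + 4 * inverse_square_sum) ^ (CARD('d) + CARD('h))
           * (R ^ (CARD('d) - 1) * S * \<eta> ^ CARD('h) + R ^ CARD('d) * \<epsilon>R * \<eta> ^ (CARD('h) - 1))"
    using sum_prod_Basis_Pair_le[OF S \<epsilon>R inverse_square_sum_nonneg, of "\<lambda>a. hi \<bullet> a - lo \<bullet> a"] box
    by simp
  finally show ?thesis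
    using abs_summable_summable[OF norm_summable] by simp
qed

theorem proposition4p1:
  shows "\<exists>C>0. \<forall>(L :: ((real^'d) \<times> (real^'h)) set) (W :: (real^'h) set) (c :: real^'h)
      (\<eta>::real) (t :: real^'d) (R::real) (S::real) (\<epsilon>R::real).
    is_lattice L \<and> inj_on fst L \<and> closure (snd ` L) = UNIV \<and>
    0 < \<eta> \<and> W = cbox c (c + \<eta> *\<^sub>R One) \<and>
    0 < R \<and> 0 < S \<and> S \<le> R \<and>
    {\<theta>. (\<theta>, 0) \<in> dual_lattice L \<and>
        ((0 < infnorm \<theta> \<and> infnorm \<theta> \<le> 1 / S) \<or>
         (0 < infnorm (\<theta> + t) \<and> infnorm (\<theta> + t) \<le> 1 / S))} = {} \<and>
    \<epsilon>R = Inf {\<epsilon>. 0 < \<epsilon> \<and> A_set S 0 \<epsilon> \<inter> dual_lattice L = {} \<and>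
                    A_set S t \<epsilon> \<inter> dual_lattice L = {}} \<and>
    \<epsilon>R \<le> \<eta>
    \<longrightarrow>
    (let \<phi> = (\<lambda>x. conv (indicator (supball R)) (indicator (supball S)) x
                   / (2 ^ CARD('d) * S ^ CARD('d)));
         \<psi> = (\<lambda>y. conv (indicator W) (indicator (supball \<epsilon>R)) y
                   / (2 ^ CARD('h) * \<epsilon>R ^ CARD('h)));
         f = (\<lambda>(\<theta>, \<theta>s). fourier \<phi> (\<theta> + t) * fourier \<psi> \<theta>s);
         I = {(\<theta>, \<theta>s). (\<theta>, \<theta>s) \<in> dual_lattice L \<and> \<theta> + t \<noteq> 0}
     in f summable_on I \<and>
        norm (infsum f I) \<le> C * (R ^ (CARD('d) - 1) * S * \<eta> ^ CARD('h)
                               + R ^ CARD('d) * \<epsilon>R * \<eta> ^ (CARD('h) - 1)))"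
proof (intro exI[of _ "real (CARD('d) + CARD('h)) * (4 + 4 * inverse_square_sum) ^ (CARD('d) + CARD('h))"]
    conjI allI impI, goal_cases)
  case 1
  show ?case
    using inverse_square_sum_nonneg by (simp add: add_pos_nonneg)
next
  case (2 L W c \<eta> t R S \<epsilon>R)
  then have admissible: "admissible_eps S t L \<noteq> {}"
    by (intro admissible_eps_nonempty) auto
  have \<epsilon>R: "\<epsilon>R = Inf (admissible_eps S t L)"
    using 2 by (simp add: admissible_eps_def)
  have "0 \<le> \<epsilon>R"
    unfolding \<epsilon>R using admissible by (intro cInf_greatest) (auto simp: admissible_eps_def)
  show ?case
  proof (cases "\<epsilon>R = 0")
    case True
    \<comment> \<open>then \<open>\<psi>\<^sub>R\<close> vanishes by the convention \<open>x / 0 = 0\<close>\<close>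
    then have "(\<lambda>y. conv (indicator W) (indicator (supball \<epsilon>R)) y / (2 ^ CARD('h) * \<epsilon>R ^ CARD('h)))
        = (\<lambda>_. 0)"
      by (simp add: power_0_left)
    then show ?thesis
      using 2 inverse_square_sum_nonneg
      by (auto simp: Let_def fourier_def True case_prod_unfold intro!: mult_nonneg_nonneg)
  next
    case False
    then show ?thesis
      using 2 \<open>0 \<le> \<epsilon>R\<close> dual_lattice_fourier_sum_bound[OF _ admissible \<epsilon>R, where c = c and \<eta> = \<eta>]
      by (simp add: Let_def)
  qed
qed

end
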